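(* For every nonempty finite multiset $\mathcal{C}$ of integers $\ge 2$, \[ \#\mathrm{ST}_C(\mathcal{C})=\sum_{c\in\mathcal{C}} c\cdot \#\mathrm{ST}_W(\mathcal{C}-\{c\},c). \]
   Context: Genomes: finite directed graphs with pairwise distinct edge labels, every vertex of total degree $1$ or $2$; each edge $X$ has extremities $X^t,X^h$; degree-$2$ vertices are adjacencies (identified with $2$-element sets of extremities), degree-$1$ vertices are telomeres. Single Cut-and-Join operations: cut ($\{a,b\}\mapsto\{a\},\{b\}$), join ($\{a\},\{b\}\mapsto\{a,b\}$), cut-join ($\{a,b\},\{c\}\mapsto\{a,c\},\{b\}$). The adjacency graph $A(G_1,G_2)$ is the bipartite multigraph on $V_1$ (adjacencies and telomeres of $G_1$) and $V_2$ (those of $G_2$) with $|X\cap Y|$ edges between $X\in V_1$, $Y\in V_2$; operations on $G_1$ act on $V_1$-vertices. Components: $W$-shaped (even path, endpoints in $V_1$), $M$-shaped (even path, endpoints in $V_2$), $N$-shaped (odd path), crown (cycle). Size of $B$: $\lfloor|E(B)|/2\rfloor$; trivial crown = size-$1$ crown, nontrivial crown = size $\ge2$. For a set $\mathcal{B}'$ of components, $d(\mathcal{B}')=\sum_{B\in\mathcal{B}'}\mathrm{size}(B)-\#\{\text{trivial crowns}\}+\#\{\text{nontrivial crowns}\}$. In a sequence of $d(\mathcal{B}')$ operations acting only on $\mathcal{B}'$ turning it into trivial components, $A\sim B$ if $A=B$ or some cut-join joins an extremity originally in $A$ with one originally in $B$; "sort together" is the transitive closure. $\#\mathrm{ST}(\mathcal{B}')$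 counts such sequences in which all of $\mathcal{B}'$ sorts together; it depends only on types and sizes. For a finite multiset $\mathcal{C}$ of integers $\ge2$: $\#\mathrm{ST}_C(\mathcal{C})$ (for $\mathcal{C}\ne\emptyset$) is $\#\mathrm{ST}$ of a set of nontrivial crowns with sizes given by $\mathcal{C}$; $\#\mathrm{ST}_W(\mathcal{C},w)$ ($w\ge1$) is $\#\mathrm{ST}$ of such crowns together with one $W$-shaped component of size $w$. Sums over $c\in\mathcal{C}$ count multiplicity; $\mathcal{C}-\{c\}$ removes one copy of $c$. *)

theory Defs
  imports Main "HOL-Library.Multiset"
begin

(* Extremities are natural numbers; a genome on a finite extremity set is the set of its
   vertices, i.e. a partition of the extremities into blocks of size 1 (telomeres) or
   2 (adjacencies).  Gene labels play no role for SCJ counting. *)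

definition is_genome :: "nat set \<Rightarrow> nat set set \<Rightarrow> bool" where
  "is_genome E G \<longleftrightarrow> finite E \<and> \<Union>G = E \<and>
     (\<forall>X\<in>G. card X = 1 \<or> card X = 2) \<and>
     (\<forall>X\<in>G. \<forall>Y\<in>G. X \<noteq> Y \<longrightarrow> X \<inter> Y = {})"

definition adj_link :: "nat set set \<Rightarrow> nat set set \<Rightarrow> (nat \<times> nat) set" where
  "adj_link G1 G2 = {(x, y). \<exists>X \<in> G1 \<union> G2. x \<in> X \<and> y \<in> X}"

(* components, each represented by its set of edges (extremities) *)
definition comps :: "nat set set \<Rightarrow> nat set set \<Rightarrow> nat set set" where
  "comps G1 G2 = (\<lambda>x. (adj_link G1 G2)\<^sup>* `` {x}) ` (\<Union>G1)"

definition telos :: "nat set set \<Rightarrow> nat set \<Rightarrow> nat set set" where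
  "telos G S = {X \<in> G. X \<subseteq> S \<and> card X = 1}"

definition comp_size :: "nat set \<Rightarrow> nat" where
  "comp_size S = card S div 2"

definition is_crown :: "nat set set \<Rightarrow> nat set set \<Rightarrow> nat set \<Rightarrow> bool" where
  "is_crown G1 G2 S \<longleftrightarrow> telos G1 S = {} \<and> telos G2 S = {}"

definition is_W :: "nat set set \<Rightarrow> nat set set \<Rightarrow> nat set \<Rightarrow> bool" where
  "is_W G1 G2 S \<longleftrightarrow> card (telos G1 S) = 2 \<and> telos G2 S = {}"

definition is_M :: "nat set set \<Rightarrow> nat set set \<Rightarrow> nat set \<Rightarrow> bool" where
  "is_M G1 G2 S \<longleftrightarrow> telos G1 S = {} \<and> card (telos G2 S) = 2"

definition is_N :: "nat set set \<Rightarrow> nat set set \<Rightarrow> nat set \<Rightarrow> bool" where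
  "is_N G1 G2 S \<longleftrightarrow> card (telos G1 S) = 1 \<and> card (telos G2 S) = 1"

definition trivial_crown :: "nat set set \<Rightarrow> nat set set \<Rightarrow> nat set \<Rightarrow> bool" where
  "trivial_crown G1 G2 S \<longleftrightarrow> is_crown G1 G2 S \<and> comp_size S = 1"

definition nontrivial_crown :: "nat set set \<Rightarrow> nat set set \<Rightarrow> nat set \<Rightarrow> bool" where
  "nontrivial_crown G1 G2 S \<longleftrightarrow> is_crown G1 G2 S \<and> comp_size S \<ge> 2"

definition trivial_comp :: "nat set set \<Rightarrow> nat set set \<Rightarrow> nat set \<Rightarrow> bool" where
  "trivial_comp G1 G2 S \<longleftrightarrow> trivial_crown G1 G2 S \<or> (is_N G1 G2 S \<and> comp_size S = 0)"

(* d(B') for B' = the set of all components of A(G1,G2) *)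
definition dist :: "nat set set \<Rightarrow> nat set set \<Rightarrow> nat" where
  "dist G1 G2 = (\<Sum>S\<in>comps G1 G2. comp_size S)
      - card {S \<in> comps G1 G2. trivial_crown G1 G2 S}
      + card {S \<in> comps G1 G2. nontrivial_crown G1 G2 S}"

definition cut_step :: "nat set set \<Rightarrow> nat set set \<Rightarrow> bool" where
  "cut_step G G' \<longleftrightarrow> (\<exists>a b. a \<noteq> b \<and> {a, b} \<in> G \<and> G' = (G - {{a, b}}) \<union> {{a}, {b}})"

definition join_step :: "nat set set \<Rightarrow> nat set set \<Rightarrow> bool" where
  "join_step G G' \<longleftrightarrow> (\<exists>a b. a \<noteq> b \<and> {a} \<in> G \<and> {b} \<in> G \<and> G' = (G - {{a}, {b}}) \<union> {{a, b}})"

definition cutjoin_joins :: "nat set set \<Rightarrow> nat set set \<Rightarrow> nat \<Rightarrow> nat \<Rightarrow> bool" where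
  "cutjoin_joins G G' a c \<longleftrightarrow> (\<exists>b. a \<noteq> b \<and> c \<noteq> a \<and> c \<noteq> b \<and> {a, b} \<in> G \<and> {c} \<in> G \<and>
       G' = (G - {{a, b}, {c}}) \<union> {{a, c}, {b}})"

definition scj_step :: "nat set set \<Rightarrow> nat set set \<Rightarrow> bool" where
  "scj_step G G' \<longleftrightarrow> cut_step G G' \<or> join_step G G' \<or> (\<exists>a c. cutjoin_joins G G' a c)"

(* hs = list of the successive genomes after each operation, starting from G1 *)
definition sorting_seq :: "nat set set \<Rightarrow> nat set set \<Rightarrow> nat set set list \<Rightarrow> bool" where
  "sorting_seq G1 G2 hs \<longleftrightarrow> length hs = dist G1 G2 \<and>
     (\<forall>i < length hs. scj_step ((G1 # hs) ! i) ((G1 # hs) ! Suc i)) \<and>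
     (\<forall>S \<in> comps (last (G1 # hs)) G2. trivial_comp (last (G1 # hs)) G2 S)"

(* A ~ B (A \<noteq> B case): some cut-join joins an extremity originally in A with one originally in B *)
definition joined_rel :: "nat set set \<Rightarrow> nat set set \<Rightarrow> nat set set list \<Rightarrow> (nat set \<times> nat set) set" where
  "joined_rel G1 G2 hs = {(A, B). A \<in> comps G1 G2 \<and> B \<in> comps G1 G2 \<and>
      (\<exists>i < length hs. \<exists>a c. cutjoin_joins ((G1 # hs) ! i) ((G1 # hs) ! Suc i) a c \<and>
          ((a \<in> A \<and> c \<in> B) \<or> (a \<in> B \<and> c \<in> A)))}"

definition all_sort_together :: "nat set set \<Rightarrow> nat set set \<Rightarrow> nat set set list \<Rightarrow> bool" where
  "all_sort_together G1 G2 hs \<longleftrightarrow>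
     (\<forall>A \<in> comps G1 G2. \<forall>B \<in> comps G1 G2. (A, B) \<in> (joined_rel G1 G2 hs)\<^sup>*)"

(* #ST of the set of all components of A(G1,G2) *)
definition countST :: "nat set set \<Rightarrow> nat set set \<Rightarrow> nat" where
  "countST G1 G2 = card {hs. sorting_seq G1 G2 hs \<and> all_sort_together G1 G2 hs}"

definition crown1 :: "nat \<Rightarrow> nat \<Rightarrow> nat set set" where
  "crown1 off k = {{off + 2*i, off + 2*i + 1} | i. i < k}"

definition crown2 :: "nat \<Rightarrow> nat \<Rightarrow> nat set set" where
  "crown2 off k = {{off + 2*i + 1, off + (2*i + 2) mod (2*k)} | i. i < k}"

fun crowns1 :: "nat \<Rightarrow> nat list \<Rightarrow> nat set set" where
  "crowns1 off [] = {}"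
| "crowns1 off (k # ks) = crown1 off k \<union> crowns1 (off + 2*k) ks"

fun crowns2 :: "nat \<Rightarrow> nat list \<Rightarrow> nat set set" where
  "crowns2 off [] = {}"
| "crowns2 off (k # ks) = crown2 off k \<union> crowns2 (off + 2*k) ks"

(* W-shaped component of size w \<ge> 1 on extremities o .. o+2w-1 *)
definition W1 :: "nat \<Rightarrow> nat \<Rightarrow> nat set set" where
  "W1 off w = {{off}, {off + 2*w - 1}} \<union> {{off + 2*i - 1, off + 2*i} | i. 1 \<le> i \<and> i < w}"

definition W2 :: "nat \<Rightarrow> nat \<Rightarrow> nat set set" where
  "W2 off w = {{off + 2*i, off + 2*i + 1} | i. i < w}"

(* #ST_C(C): nontrivial crowns with sizes C *)
definition ST_C :: "nat multiset \<Rightarrow> nat" where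
  "ST_C C = countST (crowns1 0 (sorted_list_of_multiset C)) (crowns2 0 (sorted_list_of_multiset C))"

(* #ST_W(C, w): nontrivial crowns with sizes C plus one W-shaped component of size w *)
definition ST_W :: "nat multiset \<Rightarrow> nat \<Rightarrow> nat" where
  "ST_W C w = countST (W1 0 w \<union> crowns1 (2*w) (sorted_list_of_multiset C))
                      (W2 0 w \<union> crowns2 (2*w) (sorted_list_of_multiset C))"

end

theory Submission
  imports Defs
begin

text \<open>
  In a set of crowns the first genome has no telomeres, so every sorting sequence starts with a
  cut, and cuts join no extremities, so they never contribute to sorting together. Cutting any of
  the \<open>c\<close> adjacencies of a crown of size \<open>c \<ge> 2\<close> leaves its component connected: the crown
  becomes a W-shaped component of the same size, and since a nontrivial crown counts its size plus
  one in the distance, the distance drops by exactly one. Hence the sorting sequences are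
  partitioned by their first cut, and after relabelling the extremities (rotating the cut crown to
  the front) each block is the set of sorting sequences of the remaining crowns together with a
  W-shaped component of size \<open>c\<close>.
\<close>

section \<open>Relabelling extremities\<close>

definition relabel :: "(nat \<Rightarrow> nat) \<Rightarrow> nat set set \<Rightarrow> nat set set" where
  "relabel f G = image f ` G"

lemma inj_imageI: "inj f \<Longrightarrow> inj (image f)"
  by (simp add: inj_def inj_image_eq_iff)

lemma relabel_empty [simp]: "relabel f {} = {}"
  and relabel_insert [simp]: "relabel f (insert X G) = insert (f ` X) (relabel f G)"
  and relabel_Un [simp]: "relabel f (A \<union> B) = relabel f A \<union> relabel f B"
  and relabel_eq_empty_iff [simp]: "relabel f G = {} \<longleftrightarrow> G = {}"
  and Union_relabel: "\<Union>(relabel f G) = f ` \<Union>G"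
  by (auto simp: relabel_def)

lemma relabel_diff: "inj f \<Longrightarrow> relabel f (A - B) = relabel f A - relabel f B"
  unfolding relabel_def by (rule image_set_diff[OF inj_imageI])

lemma mem_relabel_iff: "inj f \<Longrightarrow> f ` X \<in> relabel f G \<longleftrightarrow> X \<in> G"
  by (simp add: relabel_def inj_image_mem_iff[OF inj_imageI])

lemma card_relabel: "inj f \<Longrightarrow> card (relabel f G) = card G"
  unfolding relabel_def by (rule card_image) (meson inj_imageI inj_on_subset subset_UNIV)

lemma relabel_cong: "(\<And>X x. X \<in> G \<Longrightarrow> x \<in> X \<Longrightarrow> f x = g x) \<Longrightarrow> relabel f G = relabel g G"
  unfolding relabel_def by (rule image_cong) (auto intro: image_cong)

lemma relabel_ident: "relabel (\<lambda>x. x) G = G"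
  by (simp add: relabel_def)

lemma relabel_inv_relabel: "bij f \<Longrightarrow> relabel (inv f) (relabel f G) = G"
  unfolding relabel_def image_image by (simp add: bij_is_inj image_inv_f_f)

lemma relabel_relabel_inv: "bij f \<Longrightarrow> relabel f (relabel (inv f) G) = G"
  unfolding relabel_def image_image
  by (simp add: bij_is_surj image_f_inv_f image_comp[symmetric] surj_f_inv_f bij_def)

lemma adj_link_relabel: "adj_link (relabel f G1) (relabel f G2) = map_prod f f ` adj_link G1 G2"
  unfolding adj_link_def relabel_def by (auto simp: image_iff)

lemma rtrancl_map:
  "(x, y) \<in> r\<^sup>* \<Longrightarrow> (\<And>u v. (u, v) \<in> r \<Longrightarrow> (g u, g v) \<in> s) \<Longrightarrow> (g x, g y) \<in> s\<^sup>*"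
  by (induction rule: rtrancl_induct) (auto intro: rtrancl_into_rtrancl)

lemma rtrancl_map_prod_imageD:
  assumes "(h x, v) \<in> (map_prod h h ` R)\<^sup>*" "inj h"
  shows "\<exists>y. v = h y \<and> (x, y) \<in> R\<^sup>*"
  using assms(1)
proof (induction rule: rtrancl_induct)
  case (step u w)
  then obtain u0 where u0: "u = h u0" "(x, u0) \<in> R\<^sup>*" by blast
  from step(2) obtain p q where "(p, q) \<in> R" "u = h p" "w = h q" by auto
  with u0 assms(2) show ?case by (metis injD rtrancl.rtrancl_into_rtrancl)
qed auto

lemma Image_rtrancl_map_prod_image:
  "inj h \<Longrightarrow> (map_prod h h ` R)\<^sup>* `` {h x} = h ` (R\<^sup>* `` {x})"
  using rtrancl_map_prod_imageD[of h x _ R] rtrancl_map[of x _ R h "map_prod h h ` R"]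
  by fastforce

lemma rtrancl_map_prod_image_iff:
  "inj h \<Longrightarrow> (h x, h y) \<in> (map_prod h h ` R)\<^sup>* \<longleftrightarrow> (x, y) \<in> R\<^sup>*"
  using Image_rtrancl_map_prod_image[of h R x] by (metis Image_singleton_iff inj_image_mem_iff)

lemma comps_relabel: "inj f \<Longrightarrow> comps (relabel f G1) (relabel f G2) = image f ` comps G1 G2"
  unfolding comps_def adj_link_relabel Union_relabel image_image
  by (simp add: Image_rtrancl_map_prod_image)

lemma telos_relabel: "inj f \<Longrightarrow> telos (relabel f G) (f ` S) = relabel f (telos G S)"
  unfolding telos_def relabel_def
  by (auto simp: card_image inj_image_subset_iff inj_on_subset[of f UNIV])

lemma comp_size_image: "inj f \<Longrightarrow> comp_size (f ` S) = comp_size S"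
  by (simp add: comp_size_def card_image inj_on_subset[of f UNIV])

lemma component_types_relabel:
  assumes "inj f"
  shows "is_crown (relabel f G1) (relabel f G2) (f ` S) = is_crown G1 G2 S"
    and "is_N (relabel f G1) (relabel f G2) (f ` S) = is_N G1 G2 S"
    and "trivial_crown (relabel f G1) (relabel f G2) (f ` S) = trivial_crown G1 G2 S"
    and "nontrivial_crown (relabel f G1) (relabel f G2) (f ` S) = nontrivial_crown G1 G2 S"
    and "trivial_comp (relabel f G1) (relabel f G2) (f ` S) = trivial_comp G1 G2 S"
  using assms
  by (simp_all add: is_crown_def is_N_def trivial_crown_def nontrivial_crown_def trivial_comp_def
      telos_relabel card_relabel comp_size_image)

lemma card_filter_image:
  assumes "inj f" "\<And>S. P' (f ` S) = P S"
  shows "card {S \<in> image f ` CS. P' S} = card {S \<in> CS. P S}"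
proof -
  have "{S \<in> image f ` CS. P' S} = image f ` {S \<in> CS. P S}" using assms(2) by auto
  then show ?thesis
    by (metis (no_types, lifting) assms(1) card_image inj_imageI inj_on_subset subset_UNIV)
qed

lemma dist_relabel: "inj f \<Longrightarrow> dist (relabel f G1) (relabel f G2) = dist G1 G2"
proof -
  assume f: "inj f"
  have "(\<Sum>S\<in>image f ` comps G1 G2. comp_size S) = (\<Sum>S\<in>comps G1 G2. comp_size S)"
    by (subst sum.reindex) (auto simp: comp_size_image[OF f] intro: inj_on_subset[OF inj_imageI[OF f]])
  then show ?thesis
    unfolding dist_def comps_relabel[OF f]
    using card_filter_image[OF f, of "trivial_crown (relabel f G1) (relabel f G2)" "trivial_crown G1 G2"]
      card_filter_image[OF f, of "nontrivial_crown (relabel f G1) (relabel f G2)" "nontrivial_crown G1 G2"]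
    by (simp add: component_types_relabel[OF f])
qed

lemma cut_step_relabel: "inj f \<Longrightarrow> cut_step G G' \<Longrightarrow> cut_step (relabel f G) (relabel f G')"
  unfolding cut_step_def
proof (elim exE conjE)
  fix a b assume f: "inj f" and ab: "a \<noteq> b" "{a, b} \<in> G" "G' = G - {{a, b}} \<union> {{a}, {b}}"
  then have "f a \<noteq> f b" "{f a, f b} \<in> relabel f G"
    "relabel f G' = relabel f G - {{f a, f b}} \<union> {{f a}, {f b}}"
    using mem_relabel_iff[OF f, of "{a, b}"] by (auto dest: injD simp: relabel_diff)
  then show "\<exists>a b. a \<noteq> b \<and> {a, b} \<in> relabel f G \<and>
      relabel f G' = relabel f G - {{a, b}} \<union> {{a}, {b}}" by blast
qed

lemma join_step_relabel: "inj f \<Longrightarrow> join_step G G' \<Longrightarrow> join_step (relabel f G) (relabel f G')"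
  unfolding join_step_def
proof (elim exE conjE)
  fix a b assume f: "inj f" and ab: "a \<noteq> b" "{a} \<in> G" "{b} \<in> G" "G' = G - {{a}, {b}} \<union> {{a, b}}"
  then have "f a \<noteq> f b" "{f a} \<in> relabel f G" "{f b} \<in> relabel f G"
    "relabel f G' = relabel f G - {{f a}, {f b}} \<union> {{f a, f b}}"
    using mem_relabel_iff[OF f, of "{a}"] mem_relabel_iff[OF f, of "{b}"]
    by (auto dest: injD simp: relabel_diff)
  then show "\<exists>a b. a \<noteq> b \<and> {a} \<in> relabel f G \<and> {b} \<in> relabel f G \<and>
      relabel f G' = relabel f G - {{a}, {b}} \<union> {{a, b}}" by blast
qed

lemma cutjoin_joins_relabel:
  "inj f \<Longrightarrow> cutjoin_joins G G' a c \<Longrightarrow> cutjoin_joins (relabel f G) (relabel f G') (f a) (f c)"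
  unfolding cutjoin_joins_def
proof (elim exE conjE)
  fix b assume f: "inj f" and abc: "a \<noteq> b" "c \<noteq> a" "c \<noteq> b" "{a, b} \<in> G" "{c} \<in> G"
    "G' = G - {{a, b}, {c}} \<union> {{a, c}, {b}}"
  then have "f a \<noteq> f b" "f c \<noteq> f a" "f c \<noteq> f b" "{f a, f b} \<in> relabel f G" "{f c} \<in> relabel f G"
    "relabel f G' = relabel f G - {{f a, f b}, {f c}} \<union> {{f a, f c}, {f b}}"
    using mem_relabel_iff[OF f, of "{a, b}"] mem_relabel_iff[OF f, of "{c}"]
    by (auto dest: injD simp: relabel_diff)
  then show "\<exists>b. f a \<noteq> b \<and> f c \<noteq> f a \<and> f c \<noteq> b \<and>
      {f a, b} \<in> relabel f G \<and> {f c} \<in> relabel f G \<and>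
      relabel f G' = relabel f G - {{f a, b}, {f c}} \<union> {{f a, f c}, {b}}" by blast
qed

lemma scj_step_relabel: "inj f \<Longrightarrow> scj_step G G' \<Longrightarrow> scj_step (relabel f G) (relabel f G')"
  unfolding scj_step_def using cut_step_relabel join_step_relabel cutjoin_joins_relabel by blast

lemma sorting_seq_relabel:
  assumes f: "inj f" and hs: "sorting_seq G1 G2 hs"
  shows "sorting_seq (relabel f G1) (relabel f G2) (map (relabel f) hs)"
proof -
  have Cons_map: "relabel f G1 # map (relabel f) hs = map (relabel f) (G1 # hs)" by simp
  have last_map: "last (map (relabel f) (G1 # hs)) = relabel f (last (G1 # hs))"
    by (rule last_map) simp
  show ?thesis
    unfolding sorting_seq_def Cons_map last_map
  proof (intro conjI allI impI ballI)
    show "length (map (relabel f) hs) = dist (relabel f G1) (relabel f G2)"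
      using hs by (simp add: sorting_seq_def dist_relabel[OF f])
  next
    fix j assume "j < length (map (relabel f) hs)"
    then show "scj_step (map (relabel f) (G1 # hs) ! j) (map (relabel f) (G1 # hs) ! Suc j)"
      using hs scj_step_relabel[OF f] unfolding sorting_seq_def
      by (metis length_Cons length_map Suc_mono nth_map less_SucI)
  next
    fix S assume "S \<in> comps (relabel f (last (G1 # hs))) (relabel f G2)"
    then obtain S0 where "S = f ` S0" "S0 \<in> comps (last (G1 # hs)) G2"
      by (auto simp: comps_relabel[OF f])
    then show "trivial_comp (relabel f (last (G1 # hs))) (relabel f G2) S"
      using hs by (simp add: sorting_seq_def component_types_relabel[OF f])
  qed
qed

lemma joined_rel_relabel:
  assumes f: "inj f" and AB: "(A, B) \<in> joined_rel G1 G2 hs"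
  shows "(f ` A, f ` B) \<in> joined_rel (relabel f G1) (relabel f G2) (map (relabel f) hs)"
proof -
  obtain j a c where j: "A \<in> comps G1 G2" "B \<in> comps G1 G2" "j < length hs"
    "cutjoin_joins ((G1 # hs) ! j) ((G1 # hs) ! Suc j) a c"
    "(a \<in> A \<and> c \<in> B) \<or> (a \<in> B \<and> c \<in> A)"
    using AB unfolding joined_rel_def by blast
  have nth: "(relabel f G1 # map (relabel f) hs) ! i = relabel f ((G1 # hs) ! i)" if "i \<le> length hs" for i
    using that by (metis list.simps(9) nth_map length_Cons less_Suc_eq_le)
  have "cutjoin_joins ((relabel f G1 # map (relabel f) hs) ! j)
      ((relabel f G1 # map (relabel f) hs) ! Suc j) (f a) (f c)"
    using cutjoin_joins_relabel[OF f j(4)] j(3) by (simp only: nth Suc_leI less_imp_le)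
  moreover have "f ` A \<in> comps (relabel f G1) (relabel f G2)" "f ` B \<in> comps (relabel f G1) (relabel f G2)"
    using j(1,2) by (auto simp: comps_relabel[OF f])
  moreover have "(f a \<in> f ` A \<and> f c \<in> f ` B) \<or> (f a \<in> f ` B \<and> f c \<in> f ` A)"
    using j(5) by blast
  ultimately show ?thesis
    unfolding joined_rel_def mem_Collect_eq case_prod_conv length_map using j(3) by blast
qed

lemma all_sort_together_relabel:
  assumes f: "inj f" and hs: "all_sort_together G1 G2 hs"
  shows "all_sort_together (relabel f G1) (relabel f G2) (map (relabel f) hs)"
  unfolding all_sort_together_def
proof (intro ballI)
  fix A' B' assume "A' \<in> comps (relabel f G1) (relabel f G2)" "B' \<in> comps (relabel f G1) (relabel f G2)"
  then obtain A B where AB: "A' = f ` A" "B' = f ` B" "A \<in> comps G1 G2" "B \<in> comps G1 G2"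
    by (auto simp: comps_relabel[OF f])
  then have "(A, B) \<in> (joined_rel G1 G2 hs)\<^sup>*"
    using hs unfolding all_sort_together_def by blast
  from rtrancl_map[OF this, where g = "image f"]
  show "(A', B') \<in> (joined_rel (relabel f G1) (relabel f G2) (map (relabel f) hs))\<^sup>*"
    using joined_rel_relabel[OF f] AB by blast
qed

definition st_seqs :: "nat set set \<Rightarrow> nat set set \<Rightarrow> nat set set list set" where
  "st_seqs G1 G2 = {hs. sorting_seq G1 G2 hs \<and> all_sort_together G1 G2 hs}"

lemma countST_eq_card_st_seqs: "countST G1 G2 = card (st_seqs G1 G2)"
  by (simp add: countST_def st_seqs_def)

lemma st_seqs_relabel:
  assumes "bij f"
  shows "st_seqs (relabel f G1) (relabel f G2) = map (relabel f) ` st_seqs G1 G2"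
proof
  have into: "inj g \<Longrightarrow> hs \<in> st_seqs H1 H2 \<Longrightarrow> map (relabel g) hs \<in> st_seqs (relabel g H1) (relabel g H2)"
    for g H1 H2 hs
    by (simp add: st_seqs_def sorting_seq_relabel all_sort_together_relabel)
  show "map (relabel f) ` st_seqs G1 G2 \<subseteq> st_seqs (relabel f G1) (relabel f G2)"
    using into[OF bij_is_inj[OF assms]] by blast
  show "st_seqs (relabel f G1) (relabel f G2) \<subseteq> map (relabel f) ` st_seqs G1 G2"
  proof
    fix hs assume "hs \<in> st_seqs (relabel f G1) (relabel f G2)"
    then have "map (relabel (inv f)) hs \<in> st_seqs G1 G2"
      using into[OF bij_is_inj[OF bij_imp_bij_inv[OF assms]], of hs "relabel f G1" "relabel f G2"]
      by (simp add: relabel_inv_relabel[OF assms])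
    moreover have "hs = map (relabel f) (map (relabel (inv f)) hs)"
      by (simp add: relabel_relabel_inv[OF assms] comp_def)
    ultimately show "hs \<in> map (relabel f) ` st_seqs G1 G2" by blast
  qed
qed

lemma countST_relabel: "bij f \<Longrightarrow> countST (relabel f G1) (relabel f G2) = countST G1 G2"
proof -
  assume f: "bij f"
  have "inj (map (relabel f))"
    by (rule inj_mapI) (metis f relabel_inv_relabel injI)
  then show ?thesis
    unfolding countST_eq_card_st_seqs st_seqs_relabel[OF f]
    using card_image[OF inj_on_subset[OF \<open>inj (map (relabel f))\<close> subset_UNIV]] by simp
qed

section \<open>The first operation on a telomere-free genome\<close>

definition cut_adjacency :: "nat set \<Rightarrow> nat set set \<Rightarrow> nat set set" where
  "cut_adjacency X G = (G - {X}) \<union> (\<lambda>x. {x}) ` X"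

lemma cut_adjacency_pair: "cut_adjacency {a, b} G = G - {{a, b}} \<union> {{a}, {b}}"
  by (simp add: cut_adjacency_def)

lemma Union_cut_adjacency: "X \<in> G \<Longrightarrow> \<Union>(cut_adjacency X G) = \<Union>G"
  by (auto simp: cut_adjacency_def)

lemma cut_step_cut_adjacency:
  assumes "X \<in> G" "card X = 2"
  shows "cut_step G (cut_adjacency X G)"
proof -
  obtain a b where "X = {a, b}" "a \<noteq> b" using assms(2) by (auto simp: card_2_iff)
  then show ?thesis unfolding cut_step_def using assms(1) cut_adjacency_pair[of a b G] by blast
qed

lemma cut_adjacency_inj_on:
  assumes "\<forall>Y\<in>G. card Y = 2" "X \<in> G" "Y \<in> G" "cut_adjacency X G = cut_adjacency Y G"
  shows "X = Y"
proof (rule ccontr)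
  assume "X \<noteq> Y"
  then have "Y \<in> cut_adjacency X G" using assms(3) by (simp add: cut_adjacency_def)
  moreover have "Y \<notin> cut_adjacency Y G"
  proof
    assume "Y \<in> cut_adjacency Y G"
    then obtain y where "Y = {y}" by (auto simp: cut_adjacency_def)
    then show False using assms(1,3) by auto
  qed
  ultimately show False using assms(4) by simp
qed

lemma no_telomere_no_cutjoin:
  assumes "\<forall>Y\<in>G. card Y = 2"
  shows "\<not> cutjoin_joins G G' a c"
proof
  assume "cutjoin_joins G G' a c"
  then have "{c} \<in> G" unfolding cutjoin_joins_def by blast
  then show False using assms by fastforce
qed

lemma scj_step_no_telomere:
  assumes "\<forall>Y\<in>G. card Y = 2" "scj_step G G'"
  obtains X where "X \<in> G" "G' = cut_adjacency X G"
proof -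
  have "\<not> join_step G G'"
  proof
    assume "join_step G G'"
    then obtain a where "{a} \<in> G" unfolding join_step_def by blast
    then show False using assms(1) by fastforce
  qed
  then have "cut_step G G'"
    using assms no_telomere_no_cutjoin unfolding scj_step_def by blast
  then obtain a b where "{a, b} \<in> G" "G' = cut_adjacency {a, b} G"
    unfolding cut_step_def cut_adjacency_pair by blast
  then show ?thesis using that by blast
qed

lemma Union_scj_step: "scj_step G G' \<Longrightarrow> \<Union>G' \<subseteq> \<Union>G"
  unfolding scj_step_def cut_step_def join_step_def cutjoin_joins_def by blast

lemma Union_sorting_seq:
  assumes "sorting_seq G1 G2 hs" "H \<in> set hs"
  shows "\<Union>H \<subseteq> \<Union>G1"
proof -
  have "\<Union>((G1 # hs) ! i) \<subseteq> \<Union>G1" if "i \<le> length hs" for i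
    using that
  proof (induction i)
    case (Suc i)
    then have "scj_step ((G1 # hs) ! i) ((G1 # hs) ! Suc i)"
      using assms(1) by (simp add: sorting_seq_def)
    with Suc show ?case using Union_scj_step by fastforce
  qed simp
  moreover obtain i where "i < length hs" "H = (G1 # hs) ! Suc i"
    using assms(2) by (metis in_set_conv_nth nth_Cons_Suc)
  ultimately show ?thesis by (metis Suc_leI nth_Cons_Suc)
qed

lemma finite_st_seqs:
  assumes "finite (\<Union>G1)"
  shows "finite (st_seqs G1 G2)"
proof (rule finite_subset)
  show "st_seqs G1 G2 \<subseteq> {hs. set hs \<subseteq> Pow (Pow (\<Union>G1)) \<and> length hs = dist G1 G2}"
  proof
    fix hs assume "hs \<in> st_seqs G1 G2"
    then have hs: "sorting_seq G1 G2 hs" by (simp add: st_seqs_def)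
    then have "set hs \<subseteq> Pow (Pow (\<Union>G1))" using Union_sorting_seq by blast
    moreover have "length hs = dist G1 G2" using hs by (simp add: sorting_seq_def)
    ultimately show "hs \<in> {hs. set hs \<subseteq> Pow (Pow (\<Union>G1)) \<and> length hs = dist G1 G2}" by blast
  qed
  show "finite {hs. set hs \<subseteq> Pow (Pow (\<Union>G1)) \<and> length hs = dist G1 G2}"
    by (rule finite_lists_length_eq) (simp add: assms)
qed

lemma Cons_cut_adjacency_st_seqs_iff:
  assumes "\<forall>Y\<in>G1. card Y = 2" "X \<in> G1"
    and "comps (cut_adjacency X G1) G2 = comps G1 G2"
    and "dist G1 G2 = Suc (dist (cut_adjacency X G1) G2)"
  shows "cut_adjacency X G1 # hs \<in> st_seqs G1 G2 \<longleftrightarrow> hs \<in> st_seqs (cut_adjacency X G1) G2"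
proof -
  let ?G = "cut_adjacency X G1"
  have "scj_step G1 ?G"
    using cut_step_cut_adjacency assms(1,2) by (simp add: scj_step_def)
  then have "sorting_seq G1 G2 (?G # hs) = sorting_seq ?G G2 hs"
    unfolding sorting_seq_def assms(4) by (simp add: All_less_Suc2)
  moreover have "joined_rel G1 G2 (?G # hs) = joined_rel ?G G2 hs"
    unfolding joined_rel_def assms(3) using no_telomere_no_cutjoin[OF assms(1)]
    by (simp add: Ex_less_Suc2)
  ultimately show ?thesis
    unfolding st_seqs_def all_sort_together_def by (simp add: assms(3))
qed

lemma countST_sum_first_cut:
  assumes fin: "finite (\<Union>G1)"
    and adj: "\<forall>Y\<in>G1. card Y = 2"
    and dist_pos: "dist G1 G2 \<noteq> 0"
    and cut: "\<And>X. X \<in> G1 \<Longrightarrow> comps (cut_adjacency X G1) G2 = comps G1 G2 \<and>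
        dist G1 G2 = Suc (dist (cut_adjacency X G1) G2)"
  shows "countST G1 G2 = (\<Sum>X\<in>G1. countST (cut_adjacency X G1) G2)"
proof -
  have Cons_iff: "X \<in> G1 \<Longrightarrow>
      cut_adjacency X G1 # hs \<in> st_seqs G1 G2 \<longleftrightarrow> hs \<in> st_seqs (cut_adjacency X G1) G2" for X hs
    using Cons_cut_adjacency_st_seqs_iff[OF adj] cut by blast
  have split: "st_seqs G1 G2 = (\<Union>X\<in>G1. Cons (cut_adjacency X G1) ` st_seqs (cut_adjacency X G1) G2)"
  proof (intro equalityI subsetI)
    fix hs assume hs: "hs \<in> st_seqs G1 G2"
    then obtain G' hs' where hs': "hs = G' # hs'" "scj_step G1 G'"
      using dist_pos by (cases hs) (auto simp: st_seqs_def sorting_seq_def)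
    then obtain X where "X \<in> G1" "G' = cut_adjacency X G1"
      using adj by (blast elim: scj_step_no_telomere)
    with hs hs' Cons_iff show "hs \<in> (\<Union>X\<in>G1. Cons (cut_adjacency X G1) ` st_seqs (cut_adjacency X G1) G2)"
      by blast
  qed (use Cons_iff in blast)
  have "card (st_seqs G1 G2) = (\<Sum>X\<in>G1. card (Cons (cut_adjacency X G1) ` st_seqs (cut_adjacency X G1) G2))"
    unfolding split
  proof (rule card_UN_disjoint)
    show "finite G1" using fin by (rule finite_UnionD)
    show "\<forall>X\<in>G1. finite (Cons (cut_adjacency X G1) ` st_seqs (cut_adjacency X G1) G2)"
      using finite_st_seqs fin by (simp add: Union_cut_adjacency)
    show "\<forall>X\<in>G1. \<forall>Y\<in>G1. X \<noteq> Y \<longrightarrow>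
        Cons (cut_adjacency X G1) ` st_seqs (cut_adjacency X G1) G2 \<inter>
        Cons (cut_adjacency Y G1) ` st_seqs (cut_adjacency Y G1) G2 = {}"
      using cut_adjacency_inj_on[OF adj] by blast
  qed
  then show ?thesis
    by (simp add: countST_eq_card_st_seqs card_image)
qed

section \<open>Cutting an adjacency inside a crown\<close>

lemma sym_adj_link: "sym (adj_link G1 G2)"
  unfolding adj_link_def sym_def by blast

lemma Image_rtrancl_eq_if_sym: "sym R \<Longrightarrow> (x, y) \<in> R\<^sup>* \<Longrightarrow> R\<^sup>* `` {x} = R\<^sup>* `` {y}"
  using sym_rtrancl[of R] unfolding sym_def
  by (meson Image_singleton_iff equalityI rtrancl_trans subsetI)

lemma finite_Image_rtrancl_adj_link:
  assumes "finite (\<Union>(G1 \<union> G2))"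
  shows "finite ((adj_link G1 G2)\<^sup>* `` {x})"
proof (rule finite_subset)
  show "(adj_link G1 G2)\<^sup>* `` {x} \<subseteq> insert x (\<Union>(G1 \<union> G2))"
  proof
    fix y assume "y \<in> (adj_link G1 G2)\<^sup>* `` {x}"
    then have "(x, y) \<in> (adj_link G1 G2)\<^sup>*" by simp
    then show "y \<in> insert x (\<Union>(G1 \<union> G2))"
      by (cases rule: rtrancl.cases) (auto simp: adj_link_def)
  qed
qed (use assms in simp)

lemma adj_link_cut_adjacency_subset: "X \<in> G1 \<Longrightarrow> adj_link (cut_adjacency X G1) G2 \<subseteq> adj_link G1 G2"
  unfolding adj_link_def cut_adjacency_def by blast

lemma rtrancl_adj_link_cut_adjacency:
  assumes X: "{a, b} \<in> G1" and conn: "(b, a) \<in> (adj_link (cut_adjacency {a, b} G1) G2)\<^sup>*"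
  shows "(adj_link (cut_adjacency {a, b} G1) G2)\<^sup>* = (adj_link G1 G2)\<^sup>*"
proof -
  let ?R = "adj_link G1 G2" and ?R' = "adj_link (cut_adjacency {a, b} G1) G2"
  have ab: "(a, b) \<in> ?R'\<^sup>*"
    using conn sym_rtrancl[OF sym_adj_link] unfolding sym_def by blast
  have R_sub: "?R \<subseteq> ?R'\<^sup>*"
  proof
    fix p assume "p \<in> ?R"
    then obtain x y Z where p: "p = (x, y)" "Z \<in> G1 \<union> G2" "x \<in> Z" "y \<in> Z"
      unfolding adj_link_def by blast
    show "p \<in> ?R'\<^sup>*"
    proof (cases "Z = {a, b}")
      case True
      then have "x \<in> {a, b}" "y \<in> {a, b}" using p by auto
      then show ?thesis using p ab conn by auto
    next
      case False
      then have "Z \<in> cut_adjacency {a, b} G1 \<union> G2" using p(2) by (auto simp: cut_adjacency_pair)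
      then show ?thesis using p unfolding adj_link_def by blast
    qed
  qed
  show ?thesis by (rule rtrancl_subset[OF adj_link_cut_adjacency_subset[OF X] R_sub, symmetric])
qed

lemma comps_cut_adjacency:
  assumes "{a, b} \<in> G1" "(b, a) \<in> (adj_link (cut_adjacency {a, b} G1) G2)\<^sup>*"
  shows "comps (cut_adjacency {a, b} G1) G2 = comps G1 G2"
  unfolding comps_def rtrancl_adj_link_cut_adjacency[OF assms] Union_cut_adjacency[OF assms(1)] ..

lemma dist_cut_adjacency_in_crown:
  assumes X: "{a, b} \<in> G1"
    and adj1: "\<forall>Y\<in>G1. card Y = 2" and adj2: "\<forall>Y\<in>G2. card Y \<noteq> 1"
    and fin: "finite (\<Union>G1)"
    and conn: "(b, a) \<in> (adj_link (cut_adjacency {a, b} G1) G2)\<^sup>*"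
    and size: "\<forall>S\<in>comps G1 G2. comp_size S \<ge> 2"
  shows "dist G1 G2 = Suc (dist (cut_adjacency {a, b} G1) G2)"
proof -
  let ?G = "cut_adjacency {a, b} G1" and ?R = "adj_link G1 G2"
  let ?CS = "comps G1 G2" and ?S0 = "?R\<^sup>* `` {a}"
  have S0: "?S0 \<in> ?CS" unfolding comps_def using X by blast
  have fin_comps: "finite ?CS" unfolding comps_def using fin by simp
  have b_S0: "?R\<^sup>* `` {b} = ?S0"
    using conn rtrancl_adj_link_cut_adjacency[OF X conn] Image_rtrancl_eq_if_sym[OF sym_adj_link] by blast
  have meets_ab: "a \<in> S \<or> b \<in> S \<longleftrightarrow> S = ?S0" if S: "S \<in> ?CS" for S
  proof -
    obtain x where x: "S = ?R\<^sup>* `` {x}" using S unfolding comps_def by blast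
    show ?thesis
    proof
      assume "a \<in> S \<or> b \<in> S"
      then have "S = ?R\<^sup>* `` {a} \<or> S = ?R\<^sup>* `` {b}"
        using x Image_rtrancl_eq_if_sym[OF sym_adj_link] by blast
      then show "S = ?S0" using b_S0 by auto
    qed simp
  qed
  have telos_G1: "telos G1 S = {}" and telos_G2: "telos G2 S = {}" for S
    using adj1 adj2 unfolding telos_def by auto
  have telos_G: "telos ?G S = {} \<longleftrightarrow> a \<notin> S \<and> b \<notin> S" for S
  proof -
    have "telos ?G S = {Y \<in> {{a}, {b}}. Y \<subseteq> S}"
      unfolding telos_def cut_adjacency_pair using adj1 by auto
    then show ?thesis by auto
  qed
  have no_trivial: "{S \<in> ?CS. trivial_crown G1 G2 S} = {}" "{S \<in> ?CS. trivial_crown ?G G2 S} = {}"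
    using size by (auto simp: trivial_crown_def)
  have nontrivial: "{S \<in> ?CS. nontrivial_crown G1 G2 S} = ?CS"
    using size by (auto simp: nontrivial_crown_def is_crown_def telos_G1 telos_G2)
  have nontrivial_cut: "{S \<in> ?CS. nontrivial_crown ?G G2 S} = ?CS - {?S0}"
    using size meets_ab by (auto simp: nontrivial_crown_def is_crown_def telos_G telos_G2)
  have "card ?CS \<ge> 1"
    using S0 fin_comps by (metis One_nat_def Suc_leI card_gt_0_iff empty_iff)
  then show ?thesis
    unfolding dist_def comps_cut_adjacency[OF X conn] no_trivial nontrivial nontrivial_cut
    using S0 fin_comps by simp
qed

section \<open>Canonical crowns and W-shaped components\<close>

lemma crown1_eq_image: "crown1 off k = (\<lambda>i. {off + 2*i, off + 2*i + 1}) ` {..<k}"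
  unfolding crown1_def by auto

lemma crown2_eq_image: "crown2 off k = (\<lambda>i. {off + 2*i + 1, off + (2*i + 2) mod (2*k)}) ` {..<k}"
  unfolding crown2_def by auto

lemma W1_eq_image: "W1 off w = {{off}, {off + 2*w - 1}} \<union> (\<lambda>i. {off + 2*i - 1, off + 2*i}) ` {1..<w}"
  unfolding W1_def by auto

lemma W2_eq_image: "W2 off w = (\<lambda>i. {off + 2*i, off + 2*i + 1}) ` {..<w}"
  unfolding W2_def by auto

lemma card_crown1: "card (crown1 off k) = k"
proof -
  have "inj_on (\<lambda>i. {off + 2*i, off + 2*i + 1}) {..<k}"
    by (rule inj_onI) (auto simp: doubleton_eq_iff)
  then show ?thesis unfolding crown1_eq_image by (simp add: card_image)
qed

lemma crown1_bounds: "X \<in> crown1 off k \<Longrightarrow> x \<in> X \<Longrightarrow> off \<le> x \<and> x < off + 2*k"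
  by (auto simp: crown1_eq_image)

lemma crown2_bounds: "X \<in> crown2 off k \<Longrightarrow> x \<in> X \<Longrightarrow> off \<le> x \<and> x < off + 2*k"
proof -
  assume "X \<in> crown2 off k" "x \<in> X"
  then obtain i where "i < k" "x \<in> {off + 2*i + 1, off + (2*i + 2) mod (2*k)}"
    by (auto simp: crown2_eq_image)
  moreover have "(2*i + 2) mod (2*k) < 2*k" if "i < k" for i using that by simp
  ultimately show ?thesis by fastforce
qed

lemma card_crown2_block:
  assumes "X \<in> crown2 off k"
  shows "card X = 2"
proof -
  obtain i where "i < k" "X = {off + 2*i + 1, off + (2*i + 2) mod (2*k)}"
    using assms by (auto simp: crown2_eq_image)
  moreover have "(2*i + 2) mod (2*k) = 2 * ((i + 1) mod k)"
    using mult_mod_right[of 2 "i + 1" k] by simp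
  then have "off + 2*i + 1 \<noteq> off + (2*i + 2) mod (2*k)"
    by (metis add_left_cancel even_add even_mult_iff odd_one dvd_triv_left)
  ultimately show ?thesis by simp
qed

lemma crowns1_append: "crowns1 off (xs @ ys) = crowns1 off xs \<union> crowns1 (off + 2 * sum_list xs) ys"
  and crowns2_append: "crowns2 off (xs @ ys) = crowns2 off xs \<union> crowns2 (off + 2 * sum_list xs) ys"
  by (induction xs arbitrary: off) (auto simp: algebra_simps)

lemma crowns1_bounds: "X \<in> crowns1 off xs \<Longrightarrow> x \<in> X \<Longrightarrow> off \<le> x \<and> x < off + 2 * sum_list xs"
  by (induction xs arbitrary: off) (fastforce dest: crown1_bounds)+

lemma crowns2_bounds: "X \<in> crowns2 off xs \<Longrightarrow> x \<in> X \<Longrightarrow> off \<le> x \<and> x < off + 2 * sum_list xs"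
  by (induction xs arbitrary: off) (fastforce dest: crown2_bounds)+

lemma card_crowns1_block: "X \<in> crowns1 off xs \<Longrightarrow> card X = 2"
  by (induction xs arbitrary: off) (auto simp: crown1_eq_image)

lemma card_crowns2_block: "X \<in> crowns2 off xs \<Longrightarrow> card X = 2"
  by (induction xs arbitrary: off) (auto dest: card_crown2_block)

lemma finite_crowns1: "finite (crowns1 off xs)"
  and finite_crowns2: "finite (crowns2 off xs)"
  by (induction xs arbitrary: off) (auto simp: crown1_eq_image crown2_eq_image)

lemma finite_Union_crowns1: "finite (\<Union>(crowns1 off xs))"
  using finite_crowns1 card_crowns1_block by (metis card.infinite finite_Union zero_neq_numeral)

lemma finite_Union_crowns2: "finite (\<Union>(crowns2 off xs))"
  using finite_crowns2 card_crowns2_block by (metis card.infinite finite_Union zero_neq_numeral)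

lemma crown1_shift: "relabel (\<lambda>x. x + s) (crown1 off k) = crown1 (off + s) k"
  unfolding crown1_eq_image relabel_def image_image by (rule image_cong) (auto simp: algebra_simps)

lemma crown2_shift: "relabel (\<lambda>x. x + s) (crown2 off k) = crown2 (off + s) k"
  unfolding crown2_eq_image relabel_def image_image by (rule image_cong) (auto simp: algebra_simps)

lemma crowns1_shift: "relabel (\<lambda>x. x + s) (crowns1 off xs) = crowns1 (off + s) xs"
  by (induction xs arbitrary: off) (simp_all add: crown1_shift ac_simps)

lemma crowns2_shift: "relabel (\<lambda>x. x + s) (crowns2 off xs) = crowns2 (off + s) xs"
  by (induction xs arbitrary: off) (simp_all add: crown2_shift ac_simps)

definition crown_offset :: "nat list \<Rightarrow> nat \<Rightarrow> nat" where
  "crown_offset L j = 2 * sum_list (take j L)"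

lemma crown_offset_Suc: "j < length L \<Longrightarrow> crown_offset L (Suc j) = crown_offset L j + 2 * L!j"
  by (simp add: crown_offset_def take_Suc_conv_app_nth)

lemma crown_offset_mono: "j \<le> j' \<Longrightarrow> crown_offset L j \<le> crown_offset L j'"
  by (metis crown_offset_def le_Suc_ex mult_le_mono2 sum_list_append take_add le_add1)

lemma crowns1_eq_UN: "crowns1 0 L = (\<Union>j<length L. crown1 (crown_offset L j) (L!j))"
proof -
  have "crowns1 off L = (\<Union>j<length L. crown1 (off + 2 * sum_list (take j L)) (L!j))" for off
  proof (induction L arbitrary: off)
    case (Cons k ks)
    show ?case
      unfolding length_Cons lessThan_Suc_eq_insert_0 UN_insert image_image
      by (simp add: Cons.IH ac_simps)
  qed simp
  then show ?thesis by (simp add: crown_offset_def)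
qed

lemma crown1_disjoint:
  assumes "j < length L" "j' < length L" "j \<noteq> j'"
  shows "crown1 (crown_offset L j) (L!j) \<inter> crown1 (crown_offset L j') (L!j') = {}"
proof (rule ccontr)
  assume "crown1 (crown_offset L j) (L!j) \<inter> crown1 (crown_offset L j') (L!j') \<noteq> {}"
  then obtain X x where X: "X \<in> crown1 (crown_offset L j) (L!j)" "X \<in> crown1 (crown_offset L j') (L!j')"
    and "x \<in> X"
    by (auto simp: crown1_eq_image)
  then have "crown_offset L j \<le> x \<and> x < crown_offset L j + 2*(L!j)"
    "crown_offset L j' \<le> x \<and> x < crown_offset L j' + 2*(L!j')"
    using crown1_bounds by blast+
  moreover have "crown_offset L (Suc j) \<le> crown_offset L j' \<or> crown_offset L (Suc j') \<le> crown_offset L j"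
    using assms(3) by (meson crown_offset_mono linorder_neqE_nat Suc_leI)
  ultimately show False using crown_offset_Suc[OF assms(1)] crown_offset_Suc[OF assms(2)] by linarith
qed

lemma crowns1_split: "j < length L \<Longrightarrow> crowns1 0 L = crowns1 0 (take j L) \<union>
    (crown1 (crown_offset L j) (L!j) \<union> crowns1 (crown_offset L j + 2*(L!j)) (drop (Suc j) L))"
  and crowns2_split: "j < length L \<Longrightarrow> crowns2 0 L = crowns2 0 (take j L) \<union>
    (crown2 (crown_offset L j) (L!j) \<union> crowns2 (crown_offset L j + 2*(L!j)) (drop (Suc j) L))"
  by (metis crowns1_append crowns2_append crowns1.simps(2) crowns2.simps(2) id_take_nth_drop
      crown_offset_def add_0)+

lemma W_connected:
  assumes "W1 0 k \<subseteq> H1" "W2 0 k \<subseteq> H2" "t < 2*k"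
  shows "(0, t) \<in> (adj_link H1 H2)\<^sup>*"
  using assms(3)
proof (induction t)
  case (Suc t)
  have "(t, Suc t) \<in> adj_link H1 H2"
  proof (cases "odd t")
    case True
    then obtain n where n: "t = 2*n + 1" by (metis oddE)
    then have "{t, Suc t} \<in> W1 0 k" using Suc.prems unfolding W1_eq_image by force
    then show ?thesis using assms(1) unfolding adj_link_def by blast
  next
    case False
    then obtain n where "t = 2*n" by (metis evenE)
    then have "{t, Suc t} \<in> W2 0 k" using Suc.prems unfolding W2_eq_image by force
    then show ?thesis using assms(2) unfolding adj_link_def by blast
  qed
  then show ?case using Suc by (meson Suc_lessD rtrancl.rtrancl_into_rtrancl)
qed simp

section \<open>Rotating a cut crown into a W-shaped component\<close>

text \<open>
  \<open>rotate_crown P k i\<close> moves the crown occupying the extremities \<open>P ..< P + 2k\<close> to the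
  front, read cyclically from \<open>P + 2i + 1\<close> (so the cut adjacency \<open>{P + 2i, P + 2i + 1}\<close> of
  the first genome becomes the two telomeres \<open>2k - 1\<close> and \<open>0\<close> of a W-shaped component), and
  shifts the extremities below \<open>P\<close> up by \<open>2k\<close> to make room.
\<close>

definition rotate_crown :: "nat \<Rightarrow> nat \<Rightarrow> nat \<Rightarrow> nat \<Rightarrow> nat" where
  "rotate_crown P k i x =
    (if x < P then x + 2*k
     else if x < P + 2*i + 1 then x + 2*k - P - 2*i - 1
     else if x < P + 2*k then x - P - 2*i - 1
     else x)"

definition unrotate_crown :: "nat \<Rightarrow> nat \<Rightarrow> nat \<Rightarrow> nat \<Rightarrow> nat" where
  "unrotate_crown P k i y =
    (if y < 2*k - 2*i - 1 then y + P + 2*i + 1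
     else if y < 2*k then y + P + 2*i + 1 - 2*k
     else if y < P + 2*k then y - 2*k
     else y)"

lemma rotate_unrotate_crown: "i < k \<Longrightarrow> rotate_crown P k i (unrotate_crown P k i y) = y"
  and unrotate_rotate_crown: "i < k \<Longrightarrow> unrotate_crown P k i (rotate_crown P k i x) = x"
  unfolding rotate_crown_def unrotate_crown_def by auto

lemma bij_rotate_crown: "i < k \<Longrightarrow> bij (rotate_crown P k i)"
  by (rule o_bij[of "unrotate_crown P k i"])
    (auto simp: rotate_unrotate_crown unrotate_rotate_crown fun_eq_iff)

lemma inj_unrotate_crown: "i < k \<Longrightarrow> inj (unrotate_crown P k i)"
  by (metis injI rotate_unrotate_crown)

lemma rotate_crown_after_cut: "2*i + 1 \<le> x \<Longrightarrow> x < 2*k \<Longrightarrow> rotate_crown P k i (P + x) = x - 2*i - 1"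
  and rotate_crown_before_cut: "i < k \<Longrightarrow> x < 2*i + 1 \<Longrightarrow> rotate_crown P k i (P + x) = x + 2*k - 2*i - 1"
  unfolding rotate_crown_def by simp_all

definition rotate_index :: "nat \<Rightarrow> nat \<Rightarrow> nat \<Rightarrow> nat" where
  "rotate_index k i m = (if i \<le> m then m - i else m + k - i)"

lemma rotate_index_image: "i < k \<Longrightarrow> rotate_index k i ` {..<k} = {..<k}"
proof
  assume i: "i < k"
  show "rotate_index k i ` {..<k} \<subseteq> {..<k}" using i by (auto simp: rotate_index_def)
  show "{..<k} \<subseteq> rotate_index k i ` {..<k}"
  proof
    fix n assume "n \<in> {..<k}"
    then have "n = rotate_index k i (if n + i < k then n + i else n + i - k)"
      "(if n + i < k then n + i else n + i - k) \<in> {..<k}"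
      using i by (auto simp: rotate_index_def)
    then show "n \<in> rotate_index k i ` {..<k}" by blast
  qed
qed

lemma rotate_index_image_remove: "i < k \<Longrightarrow> rotate_index k i ` ({..<k} - {i}) = {1..<k}"
proof -
  assume i: "i < k"
  have "inj_on (rotate_index k i) {..<k}"
    using rotate_index_image[OF i] by (simp add: eq_card_imp_inj_on)
  then have "rotate_index k i ` ({..<k} - {i}) = {..<k} - {rotate_index k i i}"
    using i by (simp add: inj_on_image_set_diff rotate_index_image)
  then show ?thesis by (auto simp: rotate_index_def)
qed

lemma relabel_rotate_crown_cut_crown1:
  assumes i: "i < k"
  shows "relabel (rotate_crown P k i) (cut_adjacency {P + 2*i, P + 2*i + 1} (crown1 P k)) = W1 0 k"
proof -
  let ?r = "rotate_crown P k i" and ?q = "rotate_index k i"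
  have "crown1 P k - {{P + 2*i, P + 2*i + 1}} = (\<lambda>m. {P + 2*m, P + 2*m + 1}) ` ({..<k} - {i})"
    unfolding crown1_eq_image by (auto simp: doubleton_eq_iff)
  moreover have "relabel ?r ((\<lambda>m. {P + 2*m, P + 2*m + 1}) ` ({..<k} - {i})) =
      (\<lambda>n. {2*n - 1, 2*n}) ` (?q ` ({..<k} - {i}))"
    unfolding relabel_def image_image
  proof (rule image_cong)
    fix m assume "m \<in> {..<k} - {i}"
    then have "?r (P + 2*m) = 2 * ?q m - 1 \<and> ?r (P + (2*m + 1)) = 2 * ?q m"
      using i rotate_crown_after_cut[of i "2*m" k P] rotate_crown_after_cut[of i "2*m + 1" k P]
        rotate_crown_before_cut[of i k "2*m" P] rotate_crown_before_cut[of i k "2*m + 1" P]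
      by (auto simp: rotate_index_def)
    then show "?r ` {P + 2*m, P + 2*m + 1} = {2 * ?q m - 1, 2 * ?q m}" by (simp add: add.assoc)
  qed simp
  moreover have "relabel ?r {{P + 2*i}, {P + 2*i + 1}} = {{0}, {0 + 2*k - 1}}"
    using i rotate_crown_before_cut[of i k "2*i" P] rotate_crown_after_cut[of i "2*i + 1" k P]
    by (simp add: add.assoc insert_commute)
  ultimately show ?thesis
    unfolding cut_adjacency_pair relabel_Un rotate_index_image_remove[OF i] W1_eq_image by auto
qed

lemma relabel_rotate_crown_crown2:
  assumes i: "i < k"
  shows "relabel (rotate_crown P k i) (crown2 P k) = W2 0 k"
proof -
  let ?r = "rotate_crown P k i" and ?q = "rotate_index k i"
  have "relabel ?r (crown2 P k) = (\<lambda>n. {0 + 2*n, 0 + 2*n + 1}) ` (?q ` {..<k})"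
    unfolding relabel_def image_image crown2_eq_image
  proof (rule image_cong)
    fix m assume m: "m \<in> {..<k}"
    show "?r ` {P + 2*m + 1, P + (2*m + 2) mod (2*k)} = {0 + 2 * ?q m, 0 + 2 * ?q m + 1}"
    proof (cases "m = k - 1")
      case True
      then have "?r (P + (2*m + 1)) = 2 * ?q m" "?r (P + 0) = 2 * ?q m + 1"
        using i rotate_crown_after_cut[of i "2*m + 1" k P] rotate_crown_before_cut[of i k 0 P]
        by (auto simp: rotate_index_def)
      moreover have "2*m + 2 = 2*k" using True i by simp
      ultimately show ?thesis by (simp add: add.assoc)
    next
      case False
      then have "2*m + 2 < 2*k" using m by simp
      then have "?r (P + (2*m + 1)) = 2 * ?q m \<and> ?r (P + (2*m + 2)) = 2 * ?q m + 1"
        using i rotate_crown_after_cut[of i "2*m + 1" k P] rotate_crown_after_cut[of i "2*m + 2" k P]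
          rotate_crown_before_cut[of i k "2*m + 1" P] rotate_crown_before_cut[of i k "2*m + 2" P]
        by (auto simp: rotate_index_def)
      moreover have "(2*m + 2) mod (2*k) = 2*m + 2" using \<open>2*m + 2 < 2*k\<close> by simp
      ultimately show ?thesis by (simp add: add.assoc)
    qed
  qed simp
  then show ?thesis unfolding rotate_index_image[OF i] W2_eq_image .
qed

lemma relabel_rotate_crown_below:
  assumes "i < k" "P = 2 * sum_list A"
  shows "relabel (rotate_crown P k i) (crowns1 0 A) = crowns1 (2*k) A"
    and "relabel (rotate_crown P k i) (crowns2 0 A) = crowns2 (2*k) A"
proof -
  have "relabel (rotate_crown P k i) (crowns1 0 A) = relabel (\<lambda>x. x + 2*k) (crowns1 0 A)"
    by (rule relabel_cong) (use crowns1_bounds assms in \<open>fastforce simp: rotate_crown_def\<close>)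
  then show "relabel (rotate_crown P k i) (crowns1 0 A) = crowns1 (2*k) A"
    by (simp add: crowns1_shift)
  have "relabel (rotate_crown P k i) (crowns2 0 A) = relabel (\<lambda>x. x + 2*k) (crowns2 0 A)"
    by (rule relabel_cong) (use crowns2_bounds assms in \<open>fastforce simp: rotate_crown_def\<close>)
  then show "relabel (rotate_crown P k i) (crowns2 0 A) = crowns2 (2*k) A"
    by (simp add: crowns2_shift)
qed

lemma relabel_rotate_crown_above:
  assumes "i < k"
  shows "relabel (rotate_crown P k i) (crowns1 (P + 2*k) B) = crowns1 (P + 2*k) B"
    and "relabel (rotate_crown P k i) (crowns2 (P + 2*k) B) = crowns2 (P + 2*k) B"
proof -
  have "relabel (rotate_crown P k i) (crowns1 (P + 2*k) B) = relabel (\<lambda>x. x) (crowns1 (P + 2*k) B)"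
    by (rule relabel_cong) (use crowns1_bounds assms in \<open>fastforce simp: rotate_crown_def\<close>)
  then show "relabel (rotate_crown P k i) (crowns1 (P + 2*k) B) = crowns1 (P + 2*k) B"
    by (simp add: relabel_ident)
  have "relabel (rotate_crown P k i) (crowns2 (P + 2*k) B) = relabel (\<lambda>x. x) (crowns2 (P + 2*k) B)"
    by (rule relabel_cong) (use crowns2_bounds assms in \<open>fastforce simp: rotate_crown_def\<close>)
  then show "relabel (rotate_crown P k i) (crowns2 (P + 2*k) B) = crowns2 (P + 2*k) B"
    by (simp add: relabel_ident)
qed

lemma relabel_rotate_crown_cut_crowns:
  assumes j: "j < length L" and i: "i < L!j"
  defines "P \<equiv> crown_offset L j" and "k \<equiv> L!j"
  shows "relabel (rotate_crown P k i) (cut_adjacency {P + 2*i, P + 2*i + 1} (crowns1 0 L)) =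
      W1 0 k \<union> crowns1 (2*k) (take j L @ drop (Suc j) L)"
    and "relabel (rotate_crown P k i) (crowns2 0 L) =
      W2 0 k \<union> crowns2 (2*k) (take j L @ drop (Suc j) L)"
proof -
  let ?A = "take j L" and ?B = "drop (Suc j) L" and ?X = "{P + 2*i, P + 2*i + 1}"
  have ik: "i < k" using i by (simp add: k_def)
  have PA: "P = 2 * sum_list ?A" by (simp add: P_def crown_offset_def)
  have X_not_below: "?X \<notin> crowns1 0 ?A"
    using crowns1_bounds[of ?X 0 ?A "P + 2*i"] PA by auto
  have X_not_above: "?X \<notin> crowns1 (P + 2*k) ?B"
    using crowns1_bounds[of ?X "P + 2*k" ?B "P + 2*i"] ik by auto
  have cut: "cut_adjacency ?X (crowns1 0 L) =
      crowns1 0 ?A \<union> (cut_adjacency ?X (crown1 P k) \<union> crowns1 (P + 2*k) ?B)"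
    unfolding crowns1_split[OF j] cut_adjacency_def P_def[symmetric] k_def[symmetric]
    using X_not_below X_not_above by auto
  have append1: "crowns1 (2*k) (?A @ ?B) = crowns1 (2*k) ?A \<union> crowns1 (P + 2*k) ?B"
    by (simp add: crowns1_append PA ac_simps)
  show "relabel (rotate_crown P k i) (cut_adjacency ?X (crowns1 0 L)) =
      W1 0 k \<union> crowns1 (2*k) (?A @ ?B)"
    unfolding cut append1 relabel_Un relabel_rotate_crown_below(1)[OF ik PA] relabel_rotate_crown_above[OF ik]
      relabel_rotate_crown_cut_crown1[OF ik] by blast
  have append2: "crowns2 (2*k) (?A @ ?B) = crowns2 (2*k) ?A \<union> crowns2 (P + 2*k) ?B"
    by (simp add: crowns2_append PA ac_simps)
  show "relabel (rotate_crown P k i) (crowns2 0 L) = W2 0 k \<union> crowns2 (2*k) (?A @ ?B)"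
    unfolding crowns2_split[OF j] P_def[symmetric] k_def[symmetric] append2 relabel_Un
      relabel_rotate_crown_below(2)[OF ik PA] relabel_rotate_crown_above[OF ik]
      relabel_rotate_crown_crown2[OF ik] by blast
qed

section \<open>Families of crowns\<close>

locale crown_family =
  fixes L :: "nat list"
  assumes sizes_ge_2: "\<forall>k\<in>set L. k \<ge> 2"
begin

abbreviation "G1 \<equiv> crowns1 0 L"
abbreviation "G2 \<equiv> crowns2 0 L"

lemma mem_G1_iff:
  "X \<in> G1 \<longleftrightarrow> (\<exists>j<length L. \<exists>i<L!j. X = {crown_offset L j + 2*i, crown_offset L j + 2*i + 1})"
  unfolding crowns1_eq_UN crown1_eq_image by blast

lemma reachable_after_cut:
  assumes j: "j < length L" and i: "i < L!j"
  defines "P \<equiv> crown_offset L j" and "k \<equiv> L!j"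
  defines "R \<equiv> adj_link (cut_adjacency {P + 2*i, P + 2*i + 1} G1) G2"
  shows "(P + 2*i + 1, P + 2*i) \<in> R\<^sup>*"
    and "unrotate_crown P k i ` {..<2*k} \<subseteq> R\<^sup>* `` {P + 2*i + 1}"
proof -
  let ?r = "rotate_crown P k i"
  have ik: "i < k" using i by (simp add: k_def)
  have inj: "inj ?r" using bij_is_inj[OF bij_rotate_crown[OF ik]] .
  have "map_prod ?r ?r ` R =
      adj_link (W1 0 k \<union> crowns1 (2*k) (take j L @ drop (Suc j) L)) (W2 0 k \<union> crowns2 (2*k) (take j L @ drop (Suc j) L))"
    unfolding R_def adj_link_relabel[symmetric] relabel_rotate_crown_cut_crowns[OF j i, folded P_def k_def] ..
  then have W_path: "t < 2*k \<Longrightarrow> (?r (P + 2*i + 1), t) \<in> (map_prod ?r ?r ` R)\<^sup>*" for t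
    using W_connected[of k, OF Un_upper1 Un_upper1] rotate_crown_after_cut[of i "2*i + 1" k P] ik
    by (simp add: add.assoc)
  have "?r (P + 2*i) = 2*k - 1"
    using rotate_crown_before_cut[of i k "2*i" P] ik by simp
  then show "(P + 2*i + 1, P + 2*i) \<in> R\<^sup>*"
    using W_path[of "2*k - 1"] ik rtrancl_map_prod_image_iff[OF inj] by fastforce
  show "unrotate_crown P k i ` {..<2*k} \<subseteq> R\<^sup>* `` {P + 2*i + 1}"
  proof
    fix y assume "y \<in> unrotate_crown P k i ` {..<2*k}"
    then obtain t where "t < 2*k" "?r y = t" by (auto simp: rotate_unrotate_crown[OF ik])
    then show "y \<in> R\<^sup>* `` {P + 2*i + 1}"
      using W_path rtrancl_map_prod_image_iff[OF inj] by blast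
  qed
qed

lemma comp_size_ge_2: "S \<in> comps G1 G2 \<Longrightarrow> comp_size S \<ge> 2"
proof -
  assume "S \<in> comps G1 G2"
  then obtain x X where x: "S = (adj_link G1 G2)\<^sup>* `` {x}" "X \<in> G1" "x \<in> X"
    unfolding comps_def by blast
  then obtain j i where ji: "j < length L" "i < L!j" "X = {crown_offset L j + 2*i, crown_offset L j + 2*i + 1}"
    using mem_G1_iff by blast
  let ?P = "crown_offset L j" and ?k = "L!j"
  have "unrotate_crown ?P ?k i ` {..<2*?k} \<subseteq> (adj_link (cut_adjacency X G1) G2)\<^sup>* `` {?P + 2*i + 1}"
    using reachable_after_cut(2)[OF ji(1,2)] ji(3) by simp
  also have "\<dots> \<subseteq> (adj_link G1 G2)\<^sup>* `` {?P + 2*i + 1}"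
    using rtrancl_mono[OF adj_link_cut_adjacency_subset[OF x(2)]] by blast
  also have "\<dots> \<subseteq> S"
  proof -
    have "(x, ?P + 2*i + 1) \<in> adj_link G1 G2" using x ji(3) unfolding adj_link_def by blast
    then show ?thesis using x(1) by (meson Image_singleton_iff r_into_rtrancl rtrancl_trans subsetI)
  qed
  finally have "unrotate_crown ?P ?k i ` {..<2*?k} \<subseteq> S" .
  moreover have "finite S"
    unfolding x(1) by (rule finite_Image_rtrancl_adj_link) (simp add: finite_Union_crowns1 finite_Union_crowns2)
  moreover have "card (unrotate_crown ?P ?k i ` {..<2*?k}) = 2*?k"
    using card_image[OF inj_on_subset[OF inj_unrotate_crown[OF ji(2)] subset_UNIV]] by simp
  ultimately have "card S \<ge> 2*?k" by (metis card_mono)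
  moreover have "?k \<ge> 2" using sizes_ge_2 ji(1) by simp
  ultimately show "comp_size S \<ge> 2" unfolding comp_size_def by linarith
qed

lemma cut_adjacency_comps_dist:
  assumes "X \<in> G1"
  shows "comps (cut_adjacency X G1) G2 = comps G1 G2 \<and> dist G1 G2 = Suc (dist (cut_adjacency X G1) G2)"
proof -
  obtain j i where ji: "j < length L" "i < L!j" "X = {crown_offset L j + 2*i, crown_offset L j + 2*i + 1}"
    using assms mem_G1_iff by blast
  let ?a = "crown_offset L j + 2*i" and ?b = "crown_offset L j + 2*i + 1"
  have conn: "(?b, ?a) \<in> (adj_link (cut_adjacency {?a, ?b} G1) G2)\<^sup>*"
    using reachable_after_cut(1)[OF ji(1,2)] by simp
  have adj1: "\<forall>Y\<in>G1. card Y = 2" using card_crowns1_block by blast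
  have adj2: "\<forall>Y\<in>G2. card Y \<noteq> 1" using card_crowns2_block by fastforce
  have size: "\<forall>S\<in>comps G1 G2. comp_size S \<ge> 2" using comp_size_ge_2 by blast
  show ?thesis
    unfolding ji(3) using assms ji(3) comps_cut_adjacency[OF _ conn]
      dist_cut_adjacency_in_crown[OF _ adj1 adj2 finite_Union_crowns1 conn size] by simp
qed

text \<open>\<open>ST_W\<close> lists the remaining crowns in sorted order, which is why \<open>L\<close> must be sorted.\<close>

lemma countST_cut_eq_ST_W:
  assumes sorted: "sorted L" and j: "j < length L" and i: "i < L!j"
  shows "countST (cut_adjacency {crown_offset L j + 2*i, crown_offset L j + 2*i + 1} G1) G2 =
    ST_W (mset L - {#L!j#}) (L!j)"
proof -
  let ?P = "crown_offset L j" and ?k = "L!j" and ?A = "take j L" and ?B = "drop (Suc j) L"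
  have L: "L = ?A @ ?k # ?B" using id_take_nth_drop[OF j] .
  have rest: "mset L - {#?k#} = mset (?A @ ?B)" by (subst L) simp
  have "sorted (?A @ ?k # ?B)" using sorted L by simp
  then have "sorted (?A @ ?B)" by (simp add: sorted_append)
  then have sorted_rest: "sorted_list_of_multiset (mset L - {#?k#}) = ?A @ ?B"
    unfolding rest sorted_list_of_multiset_mset by (rule sorted_sort_id)
  have "countST (cut_adjacency {?P + 2*i, ?P + 2*i + 1} G1) G2 =
      countST (relabel (rotate_crown ?P ?k i) (cut_adjacency {?P + 2*i, ?P + 2*i + 1} G1))
        (relabel (rotate_crown ?P ?k i) G2)"
    using countST_relabel[OF bij_rotate_crown[OF i]] by simp
  also have "\<dots> = ST_W (mset L - {#?k#}) ?k"
    unfolding relabel_rotate_crown_cut_crowns[OF j i] ST_W_def sorted_rest ..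
  finally show ?thesis .
qed

lemma countST_crowns_eq_sum:
  assumes sorted: "sorted L" and nonempty: "L \<noteq> []"
  shows "countST G1 G2 = (\<Sum>c\<in>#mset L. c * ST_W (mset L - {#c#}) c)"
proof -
  let ?f = "\<lambda>c. c * ST_W (mset L - {#c#}) c"
  have "2 \<le> L!0" using nonempty sizes_ge_2 by simp
  then have "{crown_offset L 0, crown_offset L 0 + 1} \<in> G1"
    using nonempty mem_G1_iff by force
  then have dist: "dist G1 G2 \<noteq> 0" using cut_adjacency_comps_dist by simp
  have adj: "\<forall>Y\<in>G1. card Y = 2" using card_crowns1_block by blast
  have "countST G1 G2 = (\<Sum>X\<in>G1. countST (cut_adjacency X G1) G2)"
    by (rule countST_sum_first_cut[OF finite_Union_crowns1 adj dist cut_adjacency_comps_dist])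
  also have "\<dots> = (\<Sum>j<length L. \<Sum>X\<in>crown1 (crown_offset L j) (L!j). countST (cut_adjacency X G1) G2)"
    unfolding crowns1_eq_UN
  proof (rule sum.UNION_disjoint)
    show "\<forall>j\<in>{..<length L}. finite (crown1 (crown_offset L j) (L!j))"
      by (simp add: crown1_eq_image)
    show "\<forall>j\<in>{..<length L}. \<forall>j'\<in>{..<length L}. j \<noteq> j' \<longrightarrow>
        crown1 (crown_offset L j) (L!j) \<inter> crown1 (crown_offset L j') (L!j') = {}"
      using crown1_disjoint by blast
  qed simp
  also have "\<dots> = (\<Sum>j<length L. \<Sum>X\<in>crown1 (crown_offset L j) (L!j). ST_W (mset L - {#L!j#}) (L!j))"
  proof (intro sum.cong refl)
    fix j X assume j: "j \<in> {..<length L}" and "X \<in> crown1 (crown_offset L j) (L!j)"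
    then obtain i where "i < L!j" "X = {crown_offset L j + 2*i, crown_offset L j + 2*i + 1}"
      by (auto simp: crown1_eq_image)
    then show "countST (cut_adjacency X G1) G2 = ST_W (mset L - {#L!j#}) (L!j)"
      using countST_cut_eq_ST_W[OF sorted] j by simp
  qed
  also have "\<dots> = (\<Sum>j<length L. ?f (L!j))"
    by (simp add: card_crown1)
  also have "\<dots> = sum_list (map ?f L)"
    by (simp add: sum_list_sum_nth atLeast0LessThan)
  also have "\<dots> = (\<Sum>c\<in>#mset L. ?f c)"
    using sum_mset_sum_list[of "map ?f L"] by simp
  finally show ?thesis .
qed

end

theorem mainTheorem6:
  fixes C :: "nat multiset"
  assumes "C \<noteq> {#}"
    and "\<forall>c \<in># C. c \<ge> 2"
  shows "ST_C C = (\<Sum>c \<in># C. c * ST_W (C - {#c#}) c)"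
proof -
  let ?L = "sorted_list_of_multiset C"
  interpret crown_family ?L
    using assms(2) by unfold_locales simp
  have "ST_C C = countST (crowns1 0 ?L) (crowns2 0 ?L)"
    by (simp add: ST_C_def)
  also have "\<dots> = (\<Sum>c\<in>#C. c * ST_W (C - {#c#}) c)"
  proof -
    have "?L \<noteq> []" using assms(1) by (metis mset_sorted_list_of_multiset mset.simps(1))
    then show ?thesis using countST_crowns_eq_sum[OF sorted_sorted_list_of_multiset] by simp
  qed
  finally show ?thesis .
qed

end
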